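(* Consider the single-batch change model described in the context, and suppose that for every batch $e\in\{1,\dots,E\}$ the post-change parameter set $\Lambda^{e}=\{\lambda:|\lambda-\theta^{(e)}|\ge\epsilon\}$ is a finite set (where $\epsilon>0$ is fixed). Then the stopping time $\tau_o=\min_{1\le e\le E}\tau^e$ is asymptotically efficient for this change point problem. That is, there exist thresholds $A=A_\beta$ with $A_\beta=\log\beta\,(1+o(1))$ such that, as $\beta\to\infty$, the stopping time $\tau_o$ with threshold $A_\beta$ satisfies \[ \mathbb{E}_\infty[\tau_o]\ge \beta(1+o(1)), \] and there is a constant $C>0$ such that \[ \mathbb{E}_1[\tau_o]\le C\log\beta\,(1+o(1)), \] whenever the change occurs in a single batch $e$ with post-change parameter $\lambda\in\Lambda^e$.
   Context: Let $\{p(\cdot;\theta):\theta\in\Theta\subseteq\mathbb{R}\}$ be a parametric family of probability densities with respect to a common dominating measure. Assume that for any two distinct parameters the Kullback–Leibler divergence between the corresponding densities is finite and strictly positive. **Period and batches.** Fix a period $T\in\mathbb{N}$ and integers $0=N_0<N_1<\dots<N_E=T$. The batches are $B_e=\{N_{e-1}+1,\dots,N_e\}$ for $e=1,\dots,E$, which partition $\{1,\dots,T\}$. For $k\in\mathbb{N}$, the batch of $k$, written $b(k)$, is the unique $j$ with $r(k)\in B_j$. Here $r(k)\in\{1,\dots,T\}$ is the residue of $k$ modulo $T$, with residue $0$ identified with $T$. There are baseline (pre-change) parameters $\theta^{(1)},\dots,\theta^{(E)}$. **Pre-change model.** Under the no-change measure $\mathbb{P}_\infty$, the observations $Y_1,Y_2,\dots$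 are independent with $Y_k\sim p(\cdot;\theta^{(b(k))})$. This is an independent and periodically identically distributed process with a step-wise constant parameter within each batch. **Single-batch change model.** For a change time $\gamma\in\mathbb{N}$, an unknown affected batch $e$, and a post-change parameter $\lambda\ne\theta^{(e)}$, the measure $\mathbb{P}_\gamma$ makes the $Y_k$ independent with the following laws: - $Y_k\sim p(\cdot;\theta^{(b(k))})$ if $k<\gamma$, or if $k\ge\gamma$ and $b(k)\ne e$; - $Y_k\sim p(\cdot;\lambda)$ if $k\ge\gamma$ and $b(k)=e$. $\mathbb{E}_\gamma$ denotes expectation under $\mathbb{P}_\gamma$. **Statistics and stopping rule.** For $\epsilon>0$ let $\Lambda^e=\{\lambda:|\lambda-\theta^{(e)}|\ge\epsilon\}$. Define \[ W_n^e=\max_{1\le k\le n}\ \sup_{\lambda\in\Lambda^e}\ \sum_{i=k,\ b(i)=e}^{n}\log\frac{p(Y_i;\lambda)}{p(Y_i;\theta^{(e)})}, \] where an empty sum equals $0$. Define $\tau^e=\inf\{n\ge1:W_n^e>A\}$ for a threshold $A>0$, and $\tau_o=\min_{1\le e\le E}\tau^e$. **Asymptotic efficiency.** A family of stopping times $\tau$ indexed by a false-alarm parameter $\beta$ is called asymptotically efficient if, as $\beta\to\infty$, $\mathbb{E}_\infty[\tau]\ge\beta(1+o(1))$, and there exists a constant $C>0$ with $\mathbb{E}_1[\tau]\le C\log\beta\,(1+o(1))$. *)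

theory Defs
  imports "HOL-Probability.Probability"
begin

definition is_density_family :: "'a measure \<Rightarrow> (real \<Rightarrow> 'a \<Rightarrow> real) \<Rightarrow> real set \<Rightarrow> bool" where
  "is_density_family M p \<Theta> \<longleftrightarrow>
     (\<forall>t\<in>\<Theta>. p t \<in> borel_measurable M \<and> (\<forall>x\<in>space M. 0 \<le> p t x)
              \<and> (\<integral>\<^sup>+ x. ennreal (p t x) \<partial>M) = 1)"

definition KL_finite :: "'a measure \<Rightarrow> (real \<Rightarrow> 'a \<Rightarrow> real) \<Rightarrow> real \<Rightarrow> real \<Rightarrow> bool" where
  "KL_finite M p a b \<longleftrightarrow>
     (AE x in M. 0 < p a x \<longrightarrow> 0 < p b x) \<and>
     integrable M (\<lambda>x. p a x * ln (p a x / p b x))"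

definition KL :: "'a measure \<Rightarrow> (real \<Rightarrow> 'a \<Rightarrow> real) \<Rightarrow> real \<Rightarrow> real \<Rightarrow> real" where
  "KL M p a b = (\<integral> x. p a x * ln (p a x / p b x) \<partial>M)"

definition resid :: "nat \<Rightarrow> nat \<Rightarrow> nat" where
  "resid T k = (if k mod T = 0 then T else k mod T)"

definition batch :: "nat \<Rightarrow> (nat \<Rightarrow> nat) \<Rightarrow> nat \<Rightarrow> nat \<Rightarrow> nat" where
  "batch T N E k = (THE j. j \<in> {1..E} \<and> resid T k \<in> {N (j - 1) + 1 .. N j})"

(* law of Y_k under the no-change measure P_infty; the path is \<omega> :: nat \<Rightarrow> 'a, Y_k = \<omega> k (k \<ge> 1) *)
definition P_inf :: "'a measure \<Rightarrow> (real \<Rightarrow> 'a \<Rightarrow> real) \<Rightarrow> nat \<Rightarrow> (nat \<Rightarrow> nat) \<Rightarrow> nat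
                      \<Rightarrow> (nat \<Rightarrow> real) \<Rightarrow> (nat \<Rightarrow> 'a) measure" where
  "P_inf M p T N E \<theta> = (\<Pi>\<^sub>M k\<in>UNIV. density M (p (\<theta> (batch T N E k))))"

definition P_change :: "'a measure \<Rightarrow> (real \<Rightarrow> 'a \<Rightarrow> real) \<Rightarrow> nat \<Rightarrow> (nat \<Rightarrow> nat) \<Rightarrow> nat
                      \<Rightarrow> (nat \<Rightarrow> real) \<Rightarrow> nat \<Rightarrow> nat \<Rightarrow> real \<Rightarrow> (nat \<Rightarrow> 'a) measure" where
  "P_change M p T N E \<theta> \<gamma> e lam =
     (\<Pi>\<^sub>M k\<in>UNIV. density M (p (if \<gamma> \<le> k \<and> batch T N E k = e then lam else \<theta> (batch T N E k))))"

definition Lam :: "real set \<Rightarrow> (nat \<Rightarrow> real) \<Rightarrow> real \<Rightarrow> nat \<Rightarrow> real set" where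
  "Lam \<Theta> \<theta> \<epsilon> e = {l \<in> \<Theta>. \<bar>l - \<theta> e\<bar> \<ge> \<epsilon>}"

(* W_n^e (valued in ereal so that the sup over an empty parameter set is meaningful) *)
definition Wstat :: "(real \<Rightarrow> 'a \<Rightarrow> real) \<Rightarrow> nat \<Rightarrow> (nat \<Rightarrow> nat) \<Rightarrow> nat \<Rightarrow> (nat \<Rightarrow> real)
                     \<Rightarrow> real set \<Rightarrow> nat \<Rightarrow> nat \<Rightarrow> (nat \<Rightarrow> 'a) \<Rightarrow> ereal" where
  "Wstat p T N E \<theta> \<Lambda> e n \<omega> =
     (SUP k\<in>{1..n}. SUP l\<in>\<Lambda>.
        ereal (\<Sum>i\<in>{i\<in>{k..n}. batch T N E i = e}. ln (p l (\<omega> i) / p (\<theta> e) (\<omega> i))))"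

definition tau_e :: "(real \<Rightarrow> 'a \<Rightarrow> real) \<Rightarrow> nat \<Rightarrow> (nat \<Rightarrow> nat) \<Rightarrow> nat \<Rightarrow> (nat \<Rightarrow> real)
                     \<Rightarrow> real set \<Rightarrow> real \<Rightarrow> nat \<Rightarrow> (nat \<Rightarrow> 'a) \<Rightarrow> enat" where
  "tau_e p T N E \<theta> \<Lambda> A e \<omega> =
     (if \<exists>n\<ge>1. Wstat p T N E \<theta> \<Lambda> e n \<omega> > ereal A
      then enat (LEAST n. n \<ge> 1 \<and> Wstat p T N E \<theta> \<Lambda> e n \<omega> > ereal A) else \<infinity>)"

definition tau_o :: "(real \<Rightarrow> 'a \<Rightarrow> real) \<Rightarrow> nat \<Rightarrow> (nat \<Rightarrow> nat) \<Rightarrow> nat \<Rightarrow> (nat \<Rightarrow> real)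
                     \<Rightarrow> real set \<Rightarrow> real \<Rightarrow> real \<Rightarrow> (nat \<Rightarrow> 'a) \<Rightarrow> enat" where
  "tau_o p T N E \<theta> \<Theta> \<epsilon> A \<omega> = (MIN e\<in>{1..E}. tau_e p T N E \<theta> (Lam \<Theta> \<theta> \<epsilon> e) A e \<omega>)"

end

theory Submission
  imports Defs
begin

text \<open>
  False alarms: under the no-change law, for a fixed batch \<open>e\<close>, parameter \<open>\<lambda>\<close> and start
  \<open>k\<close>, the exponentiated log-likelihood sums are products of independent factors of mean at
  most one, so by Ville's maximal inequality they exceed \<open>e\<^sup>A\<close> with probability at most
  \<open>e\<^sup>-\<^sup>A\<close>. A union bound over the finitely many triples with \<open>k \<le> n\<close> shows that
  \<open>\<tau>\<^sub>o > n\<close> with probability at least \<open>1 - n E |\<Lambda>| e\<^sup>-\<^sup>A\<close>; taking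
  \<open>A = log \<beta> + c\<close> and \<open>n \<approx> 3\<beta>\<close> gives \<open>E\<^sub>\<infinity> \<tau>\<^sub>o \<ge> \<beta>\<close>.

  Detection: the log-likelihood ratio of \<open>\<lambda>\<close> against \<open>\<theta>\<^sup>(\<^sup>e\<^sup>)\<close>, truncated above at some
  \<open>K\<close>, still has a positive mean \<open>\<mu>\<close> under \<open>\<lambda>\<close>. Cut time into windows of \<open>m \<approx> 2A/\<mu>\<close>
  periods; each window contains at least \<open>m\<close> observations of the affected batch, so by a
  reverse Markov inequality its log-likelihood sum exceeds \<open>A\<close>, forcing an alarm, with
  probability at least \<open>\<mu>/(2K)\<close>, independently of the other windows. Hence the number of
  windows before the alarm is dominated by a geometric variable and \<open>E\<^sub>1 \<tau>\<^sub>o = O(A)\<close>.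
\<close>

section \<open>Batches\<close>

locale batch_partition =
  fixes T E :: nat and N :: "nat \<Rightarrow> nat"
  assumes T_pos: "T \<ge> 1"
    and N0: "N 0 = 0" and NE: "N E = T"
    and N_step: "\<And>j. j < E \<Longrightarrow> N j < N (Suc j)"
begin

abbreviation "b \<equiv> batch T N E"

lemma N_strict_mono: "i < j \<Longrightarrow> j \<le> E \<Longrightarrow> N i < N j"
proof (induction j)
  case 0 then show ?case by simp
next
  case (Suc j)
  then show ?case using N_step[of j] by (cases "i = j") auto
qed

lemma N_mono: "i \<le> j \<Longrightarrow> j \<le> E \<Longrightarrow> N i \<le> N j"
  using N_strict_mono[of i j] by (cases "i = j") auto

lemma E_pos: "E \<ge> 1"
  using N0 NE T_pos by (cases E) auto

lemma N_pos: "e \<in> {1..E} \<Longrightarrow> 1 \<le> N e"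
  using N_strict_mono[of 0 e] N0 by auto

lemma N_le_T: "e \<le> E \<Longrightarrow> N e \<le> T"
  using N_mono[of e E] NE by auto

lemma batch_eqI:
  assumes j: "j \<in> {1..E}" and r: "resid T k \<in> {N (j - 1) + 1 .. N j}"
  shows "b k = j"
  unfolding batch_def
proof (rule the_equality)
  show "j \<in> {1..E} \<and> resid T k \<in> {N (j - 1) + 1..N j}" using j r by auto
next
  fix j' assume j': "j' \<in> {1..E} \<and> resid T k \<in> {N (j' - 1) + 1..N j'}"
  show "j' = j"
  proof (rule ccontr)
    assume "j' \<noteq> j"
    then consider "j' < j" | "j < j'" by linarith
    then show False
    proof cases
      case 1
      then have "N j' \<le> N (j - 1)" using j by (intro N_mono) auto
      then show False using j' r by auto
    next
      case 2
      then have "N j \<le> N (j' - 1)" using j' by (intro N_mono) auto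
      then show False using j' r by auto
    qed
  qed
qed

lemma batch_exists: "\<exists>j\<in>{1..E}. resid T k \<in> {N (j - 1) + 1 .. N j}"
proof -
  define r where "r = resid T k"
  have r: "1 \<le> r" "r \<le> T" using T_pos by (auto simp: r_def resid_def)
  have ex: "\<exists>j. r \<le> N j \<and> j \<le> E" using NE r by auto
  define j where "j = (LEAST j. r \<le> N j \<and> j \<le> E)"
  have j: "r \<le> N j \<and> j \<le> E" using LeastI_ex[OF ex] by (simp add: j_def)
  have j0: "j \<noteq> 0" using j N0 r by (cases j) auto
  have "\<not> (r \<le> N (j - 1) \<and> j - 1 \<le> E)"
    using j0 by (metis (no_types, lifting) Least_le diff_less j_def less_numeral_extra(1) not_le neq0_conv)
  then have "N (j - 1) < r" using j by auto
  then show ?thesis using j j0 unfolding r_def by (intro bexI[of _ j]) auto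
qed

lemma batch_in: "b k \<in> {1..E}"
  using batch_exists[of k] batch_eqI by metis

lemma batch_period_end:
  assumes e: "e \<in> {1..E}"
  shows "b (q * T + N e) = e"
proof (rule batch_eqI[OF e])
  have "resid T (q * T + N e) = N e"
  proof (cases "N e = T")
    case False
    then have "N e < T" using N_le_T[of e] e by auto
    then show ?thesis using N_pos[OF e] by (simp add: resid_def)
  qed (simp add: resid_def)
  then show "resid T (q * T + N e) \<in> {N (e - 1) + 1..N e}"
    using N_strict_mono[of "e - 1" e] e by auto
qed

lemma card_batch_window:
  assumes e: "e \<in> {1..E}"
  shows "m \<le> card {t \<in> {a * T <.. (a + m) * T}. b t = e}"
proof -
  define g where "g j = (a + j) * T + N e" for j
  have "g ` {..<m} \<subseteq> {t \<in> {a * T <.. (a + m) * T}. b t = e}"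
  proof
    fix x assume "x \<in> g ` {..<m}"
    then obtain j where j: "j < m" and x: "x = g j" by auto
    have "(a + j) * T + T = (a + Suc j) * T" by simp
    also have "\<dots> \<le> (a + m) * T" using j by (intro mult_le_mono1) simp
    finally have "x \<le> (a + m) * T" using N_le_T[of e] e unfolding x g_def by simp
    moreover have "a * T < x" using N_pos[OF e] unfolding x g_def by (simp add: algebra_simps)
    moreover have "b x = e" unfolding x g_def by (rule batch_period_end[OF e])
    ultimately show "x \<in> {t \<in> {a * T <.. (a + m) * T}. b t = e}" by auto
  qed
  moreover have "inj_on g {..<m}" unfolding g_def inj_on_def using T_pos by auto
  ultimately show ?thesis using card_inj_on_le[of g "{..<m}"] by simp
qed

end

lemma (in prob_space) prob_le_half_mean_le:
  fixes U :: "'a \<Rightarrow> real"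
  assumes U: "integrable M U" and bound: "\<And>\<omega>. \<omega> \<in> space M \<Longrightarrow> U \<omega> \<le> B" and B: "0 < B"
    and m: "0 \<le> m" "m \<le> expectation U"
  shows "prob {\<omega>\<in>space M. U \<omega> \<le> m / 2} \<le> 1 - m / (2 * B)"
proof -
  define H where "H = {\<omega>\<in>space M. m / 2 < U \<omega>}"
  have [measurable]: "U \<in> borel_measurable M" using U by auto
  have H: "H \<in> events" unfolding H_def by measurable
  have "U \<omega> \<le> m / 2 + B * indicator H \<omega>" if "\<omega> \<in> space M" for \<omega>
    using bound[OF that] m that by (auto simp: H_def indicator_def)
  then have "expectation U \<le> expectation (\<lambda>\<omega>. m / 2 + B * indicator H \<omega>)"
    using U H by (intro integral_mono) (auto simp: emeasure_finite less_top[symmetric])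
  also have "\<dots> = m / 2 + B * prob H"
    using H by (subst Bochner_Integration.integral_add) (auto simp: prob_space emeasure_finite less_top[symmetric])
  finally have "m / (2 * B) \<le> prob H"
    using m B by (simp add: field_simps)
  moreover have "{\<omega>\<in>space M. U \<omega> \<le> m / 2} = space M - H" by (auto simp: H_def)
  ultimately show ?thesis using prob_compl[OF H] by simp
qed

lemma ennreal_of_enat_le_block_count:
  fixes t :: enat and L :: nat
  assumes L: "1 \<le> L" and F: "\<And>j. enat (j * L) < t \<Longrightarrow> x \<in> F j"
  shows "ennreal_of_enat t \<le> of_nat L * (\<Sum>j. indicator (F j) x)"
proof -
  have count: "of_nat n \<le> of_nat L * (\<Sum>j. indicator (F j) x :: ennreal)" if n: "enat n \<le> t" for n
  proof (cases "n = 0")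
    case False
    define d where "d = (n - 1) div L + 1"
    have "x \<in> F j" if "j < d" for j
    proof -
      have "j * L \<le> (n - 1) div L * L" using that unfolding d_def by (intro mult_le_mono1) simp
      also have "\<dots> \<le> n - 1" by (metis div_mult_mod_eq le_add1)
      finally have "enat (j * L) < enat n" using False by simp
      then show ?thesis using n by (intro F) (rule order_less_le_trans)
    qed
    then have "(of_nat d :: ennreal) = (\<Sum>j<d. indicator (F j) x)" by simp
    also have "\<dots> \<le> (\<Sum>j. indicator (F j) x)" by (rule sum_le_suminf) auto
    finally have "(of_nat L * of_nat d :: ennreal) \<le> of_nat L * (\<Sum>j. indicator (F j) x)"
      by (rule mult_left_mono) simp
    moreover have "n - 1 < d * L"
    proof -
      have "(n - 1) mod L < L" using L by simp
      then show ?thesis using div_mult_mod_eq[of "n - 1" L] unfolding d_def distrib_right mult_1 by linarith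
    qed
    then have "(of_nat n :: ennreal) \<le> of_nat L * of_nat d"
      by (simp add: mult.commute flip: of_nat_mult)
    ultimately show ?thesis by order
  qed simp
  show ?thesis
  proof (cases t)
    case (enat n)
    then show ?thesis using count[of n] by simp
  next
    case infinity
    have "(SUP n. of_nat n :: ennreal) \<le> of_nat L * (\<Sum>j. indicator (F j) x)"
      using count infinity by (intro SUP_least) simp
    then show ?thesis using infinity by (simp add: ennreal_SUP_of_nat_eq_top top_unique)
  qed
qed

lemma (in prob_space) nn_integral_le_geometric_blocks:
  fixes \<tau> :: "'a \<Rightarrow> enat" and F :: "nat \<Rightarrow> 'a set"
  assumes F: "\<And>j. F j \<in> events" and F_le: "\<And>j. prob (F j) \<le> r ^ j" and r: "0 \<le> r" "r < 1"
    and L: "1 \<le> L" and \<tau>: "\<And>\<omega> j. \<omega> \<in> space M \<Longrightarrow> enat (j * L) < \<tau> \<omega> \<Longrightarrow> \<omega> \<in> F j"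
  shows "(\<integral>\<^sup>+\<omega>. ennreal_of_enat (\<tau> \<omega>) \<partial>M) \<le> ennreal (real L / (1 - r))"
proof -
  have "(\<integral>\<^sup>+\<omega>. ennreal_of_enat (\<tau> \<omega>) \<partial>M) \<le> (\<integral>\<^sup>+\<omega>. of_nat L * (\<Sum>j. indicator (F j) \<omega>) \<partial>M)"
    using L \<tau> by (intro nn_integral_mono ennreal_of_enat_le_block_count)
  also have "\<dots> = of_nat L * (\<Sum>j. emeasure M (F j))"
    using F by (simp add: nn_integral_cmult nn_integral_suminf)
  also have "\<dots> \<le> of_nat L * (\<Sum>j. ennreal (r ^ j))"
    using F_le by (intro mult_left_mono suminf_le) (auto simp: emeasure_eq_measure intro: ennreal_leI)
  also have "\<dots> = ennreal (real L / (1 - r))"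
    using r by (subst suminf_ennreal2)
      (auto simp: suminf_geometric ennreal_of_nat_eq_real_of_nat ennreal_mult[symmetric])
  finally show ?thesis .
qed

lemma integral_truncation_pos:
  fixes X :: "'a \<Rightarrow> real"
  assumes X: "integrable M X" and pos: "0 < (\<integral>y. X y \<partial>M)"
  obtains j :: nat where "1 \<le> j" "integrable M (\<lambda>y. min (X y) (real j))" "0 < (\<integral>y. min (X y) (real j) \<partial>M)"
proof -
  have [measurable]: "X \<in> borel_measurable M" using X by auto
  define s where "s j y = min (X y) (real j)" for j :: nat and y
  have sm: "s j \<in> borel_measurable M" for j unfolding s_def by measurable
  have lim: "AE y in M. (\<lambda>j. s j y) \<longlonglongrightarrow> X y"
  proof (rule AE_I2)
    fix y
    obtain j0 :: nat where "X y \<le> real j0" using real_arch_simple by blast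
    then have "eventually (\<lambda>j. s j y = X y) sequentially"
      unfolding s_def eventually_sequentially by (intro exI[of _ j0]) (auto simp: min_def)
    then show "(\<lambda>j. s j y) \<longlonglongrightarrow> X y" by (rule tendsto_eventually)
  qed
  have dom: "AE y in M. norm (s j y) \<le> norm (X y)" for j
    unfolding s_def by (auto simp: min_def)
  have int_s: "integrable M (s j)" for j
    by (rule integrable_dominated_convergence2[OF _ sm _ lim dom]) (use X in auto)
  have "(\<lambda>j. \<integral>y. s j y \<partial>M) \<longlonglongrightarrow> (\<integral>y. X y \<partial>M)"
    by (rule integral_dominated_convergence[OF _ sm _ lim dom]) (use X in auto)
  then have "eventually (\<lambda>j. 0 < (\<integral>y. s j y \<partial>M)) sequentially"
    using pos by (auto intro: order_tendstoD)
  then obtain j where "0 < (\<integral>y. s j y \<partial>M)" "1 \<le> j"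
    by (metis eventually_sequentially le_cases order.refl)
  then show ?thesis using that[of j] int_s[of j] unfolding s_def[abs_def] by simp
qed

lemma disjoint_family_blocks: "disjoint_family (\<lambda>i::nat. {i * L <.. (i + 1) * L})"
  unfolding disjoint_family_on_def
proof (intro ballI impI)
  fix i j :: nat assume "i \<noteq> j"
  then consider "(i + 1) * L \<le> j * L" | "(j + 1) * L \<le> i * L"
    by (metis Suc_eq_plus1 linorder_neqE_nat mult_le_mono1 Suc_leI)
  then show "{i * L <.. (i + 1) * L} \<inter> {j * L <.. (j + 1) * L} = {}"
    by cases auto
qed

section \<open>Independent coordinates\<close>

locale nat_product_prob_space = product_prob_space M "UNIV :: nat set" for M :: "nat \<Rightarrow> 'a measure"
begin

lemma indep_vars_coordinates: "prob_space.indep_vars (PiM UNIV M) M (\<lambda>i \<omega>. \<omega> i) UNIV"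
proof -
  have "distr (PiM UNIV M) (\<Pi>\<^sub>M i\<in>UNIV. M i) (\<lambda>x. \<lambda>i\<in>UNIV. x i) = distr (PiM UNIV M) (\<Pi>\<^sub>M i\<in>UNIV. M i) (\<lambda>x. x)"
    by (rule distr_cong) auto
  also have "\<dots> = (\<Pi>\<^sub>M i\<in>UNIV. distr (PiM UNIV M) (M i) (\<lambda>x. x i))"
    by (simp add: distr_id PiM_component cong: PiM_cong)
  finally show ?thesis
    by (subst P.indep_vars_iff_distr_eq_PiM') auto
qed

lemma nn_integral_coordinate:
  assumes [measurable]: "g \<in> borel_measurable (M i)"
  shows "(\<integral>\<^sup>+\<omega>. g (\<omega> i) \<partial>PiM UNIV M) = (\<integral>\<^sup>+y. g y \<partial>M i)"
  using nn_integral_distr[of "\<lambda>\<omega>. \<omega> i" "PiM UNIV M" "M i" g] by (simp add: PiM_component)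

lemma integral_coordinate:
  fixes g :: "'a \<Rightarrow> real"
  assumes [measurable]: "g \<in> borel_measurable (M i)"
  shows "(\<integral>\<omega>. g (\<omega> i) \<partial>PiM UNIV M) = (\<integral>y. g y \<partial>M i)"
  using integral_distr[of "\<lambda>\<omega>. \<omega> i" "PiM UNIV M" "M i" g] by (simp add: PiM_component)

lemma integrable_coordinate:
  fixes g :: "'a \<Rightarrow> real"
  assumes [measurable]: "g \<in> borel_measurable (M i)" and "integrable (M i) g"
  shows "integrable (PiM UNIV M) (\<lambda>\<omega>. g (\<omega> i))"
  using assms integrable_distr_eq[of "\<lambda>\<omega>. \<omega> i" "PiM UNIV M" "M i" g] by (simp add: PiM_component)

lemma nn_integral_mult_indep_coordinate:
  assumes i: "i \<notin> J"
    and f[measurable]: "f \<in> borel_measurable (PiM J M)" and g[measurable]: "g \<in> borel_measurable (M i)"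
  shows "(\<integral>\<^sup>+\<omega>. f (restrict \<omega> J) * g (\<omega> i) \<partial>PiM UNIV M) =
         (\<integral>\<^sup>+\<omega>. f (restrict \<omega> J) \<partial>PiM UNIV M) * (\<integral>\<^sup>+\<omega>. g (\<omega> i) \<partial>PiM UNIV M)"
proof -
  let ?X = "case_bool (f \<circ> (\<lambda>\<omega>. restrict \<omega> J)) ((\<lambda>x. g (x i)) \<circ> (\<lambda>\<omega>. restrict \<omega> {i}))"
  have "prob_space.indep_var (PiM UNIV M) (PiM J M) (\<lambda>\<omega>. restrict (\<lambda>i. \<omega> i) J)
      (PiM {i} M) (\<lambda>\<omega>. restrict (\<lambda>i. \<omega> i) {i})"
    by (rule P.indep_var_restrict[OF indep_vars_coordinates]) (use i in auto)
  from P.indep_var_compose[OF this f, of "\<lambda>x. g (x i)" borel]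
  have "prob_space.indep_vars (PiM UNIV M) (\<lambda>_. borel) ?X UNIV"
    unfolding P.indep_var_def
    by (rule P.indep_vars_cong[THEN iffD1, rotated 3]) (auto split: bool.split)
  then have "(\<integral>\<^sup>+\<omega>. (\<Prod>b\<in>UNIV. ?X b \<omega>) \<partial>PiM UNIV M) = (\<Prod>b\<in>UNIV. \<integral>\<^sup>+\<omega>. ?X b \<omega> \<partial>PiM UNIV M)"
    by (intro P.indep_vars_nn_integral) auto
  then show ?thesis by (simp add: UNIV_bool comp_def mult.commute)
qed

text \<open>Ville's maximal inequality, proved via the product stopped at its first passage above \<open>a\<close>,
  which is a supermartingale.\<close>

lemma maximal_inequality_prod:
  fixes w :: "nat \<Rightarrow> 'a \<Rightarrow> ennreal"
  assumes w[measurable]: "\<And>i. w i \<in> borel_measurable (M i)" and w1: "\<And>i. (\<integral>\<^sup>+y. w i y \<partial>M i) \<le> 1"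
  shows "a * emeasure (PiM UNIV M) {\<omega>\<in>space (PiM UNIV M). \<exists>m\<le>n. a < (\<Prod>i<m. w i (\<omega> i))} \<le> 1"
    and "{\<omega>\<in>space (PiM UNIV M). \<exists>m\<le>n. a < (\<Prod>i<m. w i (\<omega> i))} \<in> sets (PiM UNIV M)"
proof -
  define P where "P m \<omega> = (\<Prod>i<m. w i (\<omega> i))" for m and \<omega> :: "nat \<Rightarrow> 'a"
  define D where "D n \<omega> = (\<exists>m\<in>{..n}. a < P m \<omega>)" for n \<omega>
  define V where "V n \<omega> = (if D n \<omega> then a else P n \<omega>)" for n \<omega>
  have Pm[measurable]: "\<And>m J. {..<m} \<subseteq> J \<Longrightarrow> P m \<in> borel_measurable (PiM J M)"
    unfolding P_def by measurable auto
  have Dm[measurable]: "\<And>n J. {..<n} \<subseteq> J \<Longrightarrow> Measurable.pred (PiM J M) (D n)"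
    unfolding D_def by (rule pred_intros_finite(4)) (auto intro!: Pm borel_measurable_pred_less)
  have Prestr: "P m (restrict \<omega> {..<n}) = P m \<omega>" if "m \<le> n" for m n \<omega>
    using that unfolding P_def by (intro prod.cong) auto
  have Drestr: "D n (restrict \<omega> {..<n}) = D n \<omega>" for n \<omega>
    unfolding D_def using Prestr by auto
  have step: "(\<integral>\<^sup>+\<omega>. V (Suc n) \<omega> \<partial>PiM UNIV M) \<le> (\<integral>\<^sup>+\<omega>. V n \<omega> \<partial>PiM UNIV M)" for n
  proof -
    define f where "f x = (if D n x then 0 else P n x)" for x
    define F where "F \<omega> = (if D n \<omega> then a else 0)" for \<omega>
    have [measurable]: "f \<in> borel_measurable (PiM {..<n} M)" "F \<in> borel_measurable (PiM UNIV M)"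
      unfolding f_def F_def by (intro measurable_If Pm Dm; simp)+
    have f_restrict: "f (restrict \<omega> {..<n}) = (if D n \<omega> then 0 else P n \<omega>)" for \<omega>
      unfolding f_def using Drestr Prestr by auto
    have "V (Suc n) \<omega> \<le> F \<omega> + f (restrict \<omega> {..<n}) * w n (\<omega> n)" for \<omega>
    proof -
      have "P (Suc n) \<omega> = P n \<omega> * w n (\<omega> n)" unfolding P_def by simp
      moreover have "D (Suc n) \<omega> = (D n \<omega> \<or> a < P (Suc n) \<omega>)"
        unfolding D_def by (auto simp: le_Suc_eq)
      ultimately show ?thesis
        unfolding V_def f_restrict F_def by (auto intro: less_imp_le)
    qed
    then have "(\<integral>\<^sup>+\<omega>. V (Suc n) \<omega> \<partial>PiM UNIV M) \<le> (\<integral>\<^sup>+\<omega>. F \<omega> + f (restrict \<omega> {..<n}) * w n (\<omega> n) \<partial>PiM UNIV M)"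
      by (intro nn_integral_mono)
    also have "\<dots> = (\<integral>\<^sup>+\<omega>. F \<omega> \<partial>PiM UNIV M) + (\<integral>\<^sup>+\<omega>. f (restrict \<omega> {..<n}) \<partial>PiM UNIV M) * (\<integral>\<^sup>+\<omega>. w n (\<omega> n) \<partial>PiM UNIV M)"
      by (simp add: nn_integral_add nn_integral_mult_indep_coordinate)
    also have "\<dots> \<le> (\<integral>\<^sup>+\<omega>. F \<omega> \<partial>PiM UNIV M) + (\<integral>\<^sup>+\<omega>. f (restrict \<omega> {..<n}) \<partial>PiM UNIV M) * 1"
      using w1[of n] by (intro add_left_mono mult_left_mono) (auto simp: nn_integral_coordinate)
    also have "\<dots> = (\<integral>\<^sup>+\<omega>. V n \<omega> \<partial>PiM UNIV M)"
      by (simp, subst nn_integral_add[symmetric]) (auto intro!: nn_integral_cong simp: f_restrict F_def V_def)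
    finally show ?thesis .
  qed
  have bound: "(\<integral>\<^sup>+\<omega>. V n \<omega> \<partial>PiM UNIV M) \<le> 1" for n
  proof (induction n)
    case 0
    have "(\<integral>\<^sup>+\<omega>. V 0 \<omega> \<partial>PiM UNIV M) \<le> (\<integral>\<^sup>+\<omega>. 1 \<partial>PiM UNIV M)"
      by (intro nn_integral_mono) (auto simp: V_def D_def P_def)
    then show ?case by (simp add: P.emeasure_space_1)
  next
    case (Suc n) then show ?case using step[of n] by order
  qed
  have D_set: "{\<omega>\<in>space (PiM UNIV M). \<exists>m\<le>n. a < (\<Prod>i<m. w i (\<omega> i))} = {\<omega>\<in>space (PiM UNIV M). D n \<omega>}"
    by (auto simp: D_def P_def)
  have "a * emeasure (PiM UNIV M) {\<omega>\<in>space (PiM UNIV M). D n \<omega>}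
      = (\<integral>\<^sup>+\<omega>. a * indicator {\<omega>\<in>space (PiM UNIV M). D n \<omega>} \<omega> \<partial>PiM UNIV M)"
    by (subst nn_integral_cmult_indicator) auto
  also have "\<dots> \<le> (\<integral>\<^sup>+\<omega>. V n \<omega> \<partial>PiM UNIV M)"
    by (intro nn_integral_mono) (auto simp: V_def indicator_def)
  finally show "a * emeasure (PiM UNIV M) {\<omega>\<in>space (PiM UNIV M). \<exists>m\<le>n. a < (\<Prod>i<m. w i (\<omega> i))} \<le> 1"
    using bound[of n] unfolding D_set by order
  show "{\<omega>\<in>space (PiM UNIV M). \<exists>m\<le>n. a < (\<Prod>i<m. w i (\<omega> i))} \<in> sets (PiM UNIV M)"
    using Dm[of n UNIV] unfolding D_set pred_def by simp
qed

lemma prob_Inter_blocks: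
  fixes K :: "nat \<Rightarrow> nat set" and j :: nat
  assumes K: "disjoint_family K" and A: "\<And>i. A i \<in> sets (PiM (K i) M)" and j: "j \<noteq> 0"
  shows "measure (PiM UNIV M) (\<Inter>i<j. {\<omega>\<in>space (PiM UNIV M). restrict \<omega> (K i) \<in> A i})
       = (\<Prod>i<j. measure (PiM UNIV M) {\<omega>\<in>space (PiM UNIV M). restrict \<omega> (K i) \<in> A i})"
proof -
  have ind: "prob_space.indep_vars (PiM UNIV M) (\<lambda>i. PiM (K i) M) (\<lambda>i \<omega>. restrict (\<lambda>t. \<omega> t) (K i)) UNIV"
    by (rule P.indep_vars_restrict[OF indep_vars_coordinates]) (use K in \<open>auto simp: disjoint_family_on_def\<close>)
  have "measure (PiM UNIV M) (\<Inter>i\<in>{..<j}. (\<lambda>\<omega>. restrict (\<lambda>t. \<omega> t) (K i)) -` A i \<inter> space (PiM UNIV M))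
     = (\<Prod>i\<in>{..<j}. measure (PiM UNIV M) ((\<lambda>\<omega>. restrict (\<lambda>t. \<omega> t) (K i)) -` A i \<inter> space (PiM UNIV M)))"
    by (rule P.indep_varsD[OF ind]) (use j A in \<open>auto simp: lessThan_empty_iff\<close>)
  moreover have "(\<lambda>\<omega>. restrict (\<lambda>t. \<omega> t) (K i)) -` A i \<inter> space (PiM UNIV M) = {\<omega>\<in>space (PiM UNIV M). restrict \<omega> (K i) \<in> A i}" for i
    by auto
  ultimately show ?thesis by simp
qed

lemma prob_sum_coordinates_le:
  fixes g :: "'a \<Rightarrow> real"
  assumes g[measurable]: "\<And>t. g \<in> borel_measurable (M t)"
    and I: "finite I" "I \<noteq> {}" and K: "0 < K" and \<mu>: "0 \<le> \<mu>"
    and int: "\<And>t. t \<in> I \<Longrightarrow> integrable (M t) (\<lambda>y. min (g y) K)"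
    and mean: "\<And>t. t \<in> I \<Longrightarrow> \<mu> \<le> (\<integral>y. min (g y) K \<partial>M t)"
    and A: "A \<le> real (card I) * \<mu> / 2"
  shows "measure (PiM UNIV M) {\<omega>\<in>space (PiM UNIV M). (\<Sum>t\<in>I. g (\<omega> t)) \<le> A} \<le> 1 - \<mu> / (2 * K)"
proof -
  define c where "c = real (card I)"
  have c: "0 < c" using I unfolding c_def by (simp add: card_gt_0_iff)
  define U where "U \<omega> = (\<Sum>t\<in>I. min (g (\<omega> t)) K)" for \<omega>
  have U: "integrable (PiM UNIV M) U"
    unfolding U_def using int by (intro Bochner_Integration.integrable_sum integrable_coordinate) auto
  have "c * \<mu> \<le> (\<integral>\<omega>. U \<omega> \<partial>PiM UNIV M)"
  proof -
    have "c * \<mu> = (\<Sum>t\<in>I. \<mu>)" by (simp add: c_def)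
    also have "\<dots> \<le> (\<Sum>t\<in>I. \<integral>\<omega>. min (g (\<omega> t)) K \<partial>PiM UNIV M)"
    proof (rule sum_mono)
      fix t assume "t \<in> I"
      then show "\<mu> \<le> (\<integral>\<omega>. min (g (\<omega> t)) K \<partial>PiM UNIV M)"
        using mean integral_coordinate[of "\<lambda>y. min (g y) K" t] by simp
    qed
    also have "\<dots> = (\<integral>\<omega>. U \<omega> \<partial>PiM UNIV M)"
      unfolding U_def using int by (intro Bochner_Integration.integral_sum[symmetric] integrable_coordinate) auto
    finally show ?thesis .
  qed
  moreover have "U \<omega> \<le> c * K" for \<omega>
    unfolding U_def c_def using sum_mono[of I "\<lambda>t. min (g (\<omega> t)) K" "\<lambda>_. K"] by simp
  ultimately have "measure (PiM UNIV M) {\<omega>\<in>space (PiM UNIV M). U \<omega> \<le> c * \<mu> / 2} \<le> 1 - c * \<mu> / (2 * (c * K))"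
    using U c K \<mu> by (intro P.prob_le_half_mean_le) auto
  moreover have "{\<omega>\<in>space (PiM UNIV M). (\<Sum>t\<in>I. g (\<omega> t)) \<le> A} \<subseteq> {\<omega>\<in>space (PiM UNIV M). U \<omega> \<le> c * \<mu> / 2}"
  proof safe
    fix \<omega> assume "(\<Sum>t\<in>I. g (\<omega> t)) \<le> A"
    moreover have "U \<omega> \<le> (\<Sum>t\<in>I. g (\<omega> t))" unfolding U_def by (intro sum_mono) simp
    ultimately show "U \<omega> \<le> c * \<mu> / 2" using A by (simp add: c_def)
  qed
  then have "measure (PiM UNIV M) {\<omega>\<in>space (PiM UNIV M). (\<Sum>t\<in>I. g (\<omega> t)) \<le> A}
      \<le> measure (PiM UNIV M) {\<omega>\<in>space (PiM UNIV M). U \<omega> \<le> c * \<mu> / 2}"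
    unfolding U_def by (intro P.finite_measure_mono) measurable
  ultimately show ?thesis using c by (simp add: field_simps)
qed

lemma prob_all_block_sums_le:
  fixes g :: "'a \<Rightarrow> real" and S K :: "nat \<Rightarrow> nat set"
  assumes g[measurable]: "\<And>t. g \<in> borel_measurable (M t)"
    and K: "disjoint_family K" and S: "\<And>i. S i \<subseteq> K i"
    and block: "\<And>i. measure (PiM UNIV M) {\<omega>\<in>space (PiM UNIV M). (\<Sum>t\<in>S i. g (\<omega> t)) \<le> A} \<le> r"
  shows "measure (PiM UNIV M) {\<omega>\<in>space (PiM UNIV M). \<forall>i<j. (\<Sum>t\<in>S i. g (\<omega> t)) \<le> A} \<le> r ^ j"
proof (cases "j = 0")
  case True
  then show ?thesis by (simp add: P.prob_space)
next
  case False
  define B where "B i = {x\<in>space (PiM (K i) M). (\<Sum>t\<in>S i. g (x t)) \<le> A}" for i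
  have B: "B i \<in> sets (PiM (K i) M)" for i
  proof -
    have "(\<lambda>x. g (x t)) \<in> borel_measurable (PiM (K i) M)" if "t \<in> S i" for t
      using S that by (intro measurable_compose[OF measurable_component_singleton[of t "K i" M] g]) auto
    then show ?thesis unfolding B_def by measurable
  qed
  have restrict_B: "{\<omega>\<in>space (PiM UNIV M). restrict \<omega> (K i) \<in> B i}
      = {\<omega>\<in>space (PiM UNIV M). (\<Sum>t\<in>S i. g (\<omega> t)) \<le> A}" for i
  proof -
    have "(\<Sum>t\<in>S i. g (restrict \<omega> (K i) t)) = (\<Sum>t\<in>S i. g (\<omega> t))" for \<omega>
      using S by (intro sum.cong) auto
    then show ?thesis unfolding B_def by (auto simp: space_PiM)
  qed
  have "{\<omega>\<in>space (PiM UNIV M). \<forall>i<j. (\<Sum>t\<in>S i. g (\<omega> t)) \<le> A}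
      = (\<Inter>i<j. {\<omega>\<in>space (PiM UNIV M). restrict \<omega> (K i) \<in> B i})"
    using False unfolding restrict_B by auto
  then have "measure (PiM UNIV M) {\<omega>\<in>space (PiM UNIV M). \<forall>i<j. (\<Sum>t\<in>S i. g (\<omega> t)) \<le> A}
      = (\<Prod>i<j. measure (PiM UNIV M) {\<omega>\<in>space (PiM UNIV M). (\<Sum>t\<in>S i. g (\<omega> t)) \<le> A})"
    using prob_Inter_blocks[OF K B False] unfolding restrict_B by simp
  also have "\<dots> \<le> (\<Prod>i<j. r)"
    using block by (intro prod_mono) auto
  finally show ?thesis by simp
qed

end

lemma tendsto_const_div_ln: "((\<lambda>x::real. c / ln x) \<longlongrightarrow> 0) at_top"
  by (intro tendsto_divide_0[OF tendsto_const] filterlim_at_top_imp_at_infinity ln_at_top)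

lemma tendsto_ln_add_const_div_ln: "((\<lambda>x::real. (ln x + c) / ln x) \<longlongrightarrow> 1) at_top"
proof -
  have "((\<lambda>x. 1 + c / ln x) \<longlongrightarrow> 1 + 0) at_top"
    by (intro tendsto_add tendsto_const tendsto_const_div_ln)
  moreover have "\<forall>\<^sub>F x in at_top. 1 + c / ln x = (ln x + c) / ln (x::real)"
    using eventually_gt_at_top[of 1] by eventually_elim (auto simp: field_simps)
  ultimately show ?thesis by (simp add: tendsto_cong)
qed

lemma affine_ln_le_mult_ln:
  fixes C' C D :: real
  assumes "0 < C" "C' \<le> C"
  shows "\<exists>g. (g \<longlongrightarrow> 0) at_top \<and> (\<forall>x>1. C' * ln x + D \<le> C * ln x * (1 + g x))"
proof (intro exI conjI allI impI)
  show "((\<lambda>x. (\<bar>D\<bar> / C) / ln x) \<longlongrightarrow> 0) at_top" by (rule tendsto_const_div_ln)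
  fix x :: real assume "1 < x"
  then have "0 < ln x" by simp
  then have "C' * ln x + D \<le> C * ln x + \<bar>D\<bar>"
    using assms by (intro add_mono mult_right_mono) auto
  also have "\<dots> = C * ln x * (1 + (\<bar>D\<bar> / C) / ln x)"
    using \<open>0 < ln x\<close> assms by (simp add: field_simps)
  finally show "C' * ln x + D \<le> C * ln x * (1 + (\<bar>D\<bar> / C) / ln x)" .
qed

section \<open>The change-point model\<close>

locale change_point_model = batch_partition T E N
  for T E :: nat and N :: "nat \<Rightarrow> nat" +
  fixes M :: "'a measure" and p :: "real \<Rightarrow> 'a \<Rightarrow> real" and \<Theta> :: "real set"
    and \<theta> :: "nat \<Rightarrow> real" and \<epsilon> :: real
  assumes dens: "is_density_family M p \<Theta>"
    and KL_fin: "\<And>a b. a \<in> \<Theta> \<Longrightarrow> b \<in> \<Theta> \<Longrightarrow> a \<noteq> b \<Longrightarrow> KL_finite M p a b \<and> KL M p a b > 0"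
    and theta_in: "\<And>e. e \<in> {1..E} \<Longrightarrow> \<theta> e \<in> \<Theta>"
    and eps_pos: "\<epsilon> > 0"
    and Lam_finite: "\<And>e. e \<in> {1..E} \<Longrightarrow> finite (Lam \<Theta> \<theta> \<epsilon> e)"
begin

lemma p_measurable[measurable]: "t \<in> \<Theta> \<Longrightarrow> p t \<in> borel_measurable M"
  using dens by (auto simp: is_density_family_def)

lemma p_nonneg: "t \<in> \<Theta> \<Longrightarrow> x \<in> space M \<Longrightarrow> 0 \<le> p t x"
  using dens by (auto simp: is_density_family_def)

lemma nn_integral_p: "t \<in> \<Theta> \<Longrightarrow> (\<integral>\<^sup>+ x. ennreal (p t x) \<partial>M) = 1"
  using dens by (auto simp: is_density_family_def)

lemma prob_space_density_p:
  assumes t: "t \<in> \<Theta>"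
  shows "prob_space (density M (p t))"
proof (rule prob_spaceI)
  have "emeasure (density M (p t)) (space M) = (\<integral>\<^sup>+ x. ennreal (p t x) \<partial>M)"
    using t by (simp add: emeasure_density nn_integral_set_ennreal[symmetric] cong: nn_integral_cong)
  then show "emeasure (density M (p t)) (space (density M (p t))) = 1"
    using nn_integral_p[OF t] by simp
qed

lemma nat_product_prob_space_density:
  assumes "\<And>k. par k \<in> \<Theta>"
  shows "nat_product_prob_space (\<lambda>k. density M (p (par k)))"
proof -
  interpret prob_space "density M (p (par k))" for k using prob_space_density_p assms by auto
  show ?thesis
    unfolding nat_product_prob_space_def product_prob_space_def product_prob_space_axioms_def
      product_sigma_finite_def
    by (auto intro: prob_space_axioms sigma_finite_measure)
qed

lemma sets_PiM_density: "sets (PiM J (\<lambda>k. density M (p (par k)))) = sets (PiM J (\<lambda>_. M))"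
  by (rule sets_PiM_cong) auto

lemma theta_batch_in: "\<theta> (b k) \<in> \<Theta>"
  using theta_in batch_in by auto

lemma Lam_subset: "Lam \<Theta> \<theta> \<epsilon> e \<subseteq> \<Theta>"
  by (auto simp: Lam_def)

lemma Lam_neq: "l \<in> Lam \<Theta> \<theta> \<epsilon> e \<Longrightarrow> l \<noteq> \<theta> e"
  using eps_pos by (auto simp: Lam_def)

lemma nn_integral_likelihood_ratio_le_1:
  assumes l: "l \<in> \<Theta>" and t: "t \<in> \<Theta>" and lt: "l \<noteq> t"
  shows "(\<integral>\<^sup>+y. ennreal (exp (ln (p l y / p t y))) \<partial>density M (p t)) \<le> 1"
proof -
  have AE: "AE x in M. 0 < p t x \<longrightarrow> 0 < p l x"
    using KL_fin[OF t l] lt by (auto simp: KL_finite_def)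
  have "(\<integral>\<^sup>+y. ennreal (exp (ln (p l y / p t y))) \<partial>density M (p t))
      = (\<integral>\<^sup>+y. ennreal (p t y) * ennreal (exp (ln (p l y / p t y))) \<partial>M)"
    using l t by (subst nn_integral_density) auto
  also have "\<dots> \<le> (\<integral>\<^sup>+y. ennreal (p l y) \<partial>M)"
  proof (rule nn_integral_mono_AE)
    show "AE x in M. ennreal (p t x) * ennreal (exp (ln (p l x / p t x))) \<le> ennreal (p l x)"
      using AE
    proof (rule AE_mp, intro AE_I2 impI)
      fix x assume x: "x \<in> space M" and pos: "0 < p t x \<longrightarrow> 0 < p l x"
      show "ennreal (p t x) * ennreal (exp (ln (p l x / p t x))) \<le> ennreal (p l x)"
      proof (cases "p t x = 0")
        case False
        then have "0 < p t x" "0 < p l x" using p_nonneg[OF t x] pos by auto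
        then show ?thesis by (simp add: ennreal_mult[symmetric])
      qed simp
    qed
  qed
  also have "\<dots> = 1" using nn_integral_p[OF l] .
  finally show ?thesis .
qed

text \<open>The truncation makes the increments bounded above, as \<open>prob_le_half_mean_le\<close> requires.\<close>

lemma truncated_llr_mean_pos:
  assumes l: "l \<in> \<Theta>" and t: "t \<in> \<Theta>" and lt: "l \<noteq> t"
  obtains K \<mu> where "0 < K" "0 < \<mu>" "\<mu> \<le> K"
    "integrable (density M (p l)) (\<lambda>y. min (ln (p l y / p t y)) K)"
    "(\<integral>y. min (ln (p l y / p t y)) K \<partial>density M (p l)) = \<mu>"
proof -
  define X where "X y = ln (p l y / p t y)" for y
  have [measurable]: "X \<in> borel_measurable M" unfolding X_def using l t by auto
  have KL: "integrable M (\<lambda>x. p l x * X x)" "0 < (\<integral>x. p l x * X x \<partial>M)"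
    using KL_fin[OF l t lt] by (auto simp: KL_finite_def KL_def X_def)
  have "integrable (density M (p l)) X"
    using KL(1) l p_nonneg[OF l] by (subst integrable_density) auto
  moreover have "(\<integral>y. X y \<partial>density M (p l)) = (\<integral>x. p l x * X x \<partial>M)"
    using l p_nonneg[OF l] by (subst integral_density) auto
  ultimately obtain j :: nat where j: "1 \<le> j" and int: "integrable (density M (p l)) (\<lambda>y. min (X y) (real j))"
    and pos: "0 < (\<integral>y. min (X y) (real j) \<partial>density M (p l))"
    using KL(2) integral_truncation_pos by metis
  interpret prob_space "density M (p l)" using prob_space_density_p[OF l] .
  have "(\<integral>y. min (X y) (real j) \<partial>density M (p l)) \<le> (\<integral>y. real j \<partial>density M (p l))"
    using int by (intro integral_mono) auto
  also have "\<dots> = real j"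
    using prob_space by (simp add: measure_def)
  finally show ?thesis
    using that[of "real j" "\<integral>y. min (X y) (real j) \<partial>density M (p l)"] j int pos
    unfolding X_def by simp
qed

definition llr_sum :: "nat \<Rightarrow> real \<Rightarrow> nat \<Rightarrow> nat \<Rightarrow> (nat \<Rightarrow> 'a) \<Rightarrow> real" where
  "llr_sum e l k m \<omega> = (\<Sum>i\<in>{i\<in>{k..m}. b i = e}. ln (p l (\<omega> i) / p (\<theta> e) (\<omega> i)))"

lemma llr_sum_measurable:
  assumes "\<And>k. par k \<in> \<Theta>" and "e \<in> {1..E}" and "l \<in> \<Theta>"
  shows "llr_sum e l k m \<in> borel_measurable (PiM UNIV (\<lambda>k. density M (p (par k))))"
  unfolding llr_sum_def using assms theta_in
  by (subst measurable_cong_sets[OF sets_PiM_density refl]) measurable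

lemma tau_o_le_imp_llr_sum_gt:
  assumes "tau_o p T N E \<theta> \<Theta> \<epsilon> A \<omega> \<le> enat n"
  shows "\<exists>e\<in>{1..E}. \<exists>l\<in>Lam \<Theta> \<theta> \<epsilon> e. \<exists>k\<in>{1..n}. \<exists>m\<in>{k..n}. A < llr_sum e l k m \<omega>"
proof -
  obtain e where e: "e \<in> {1..E}" and te: "tau_e p T N E \<theta> (Lam \<Theta> \<theta> \<epsilon> e) A e \<omega> \<le> enat n"
    using assms E_pos unfolding tau_o_def by (auto simp: Min_le_iff)
  let ?W = "\<lambda>n. Wstat p T N E \<theta> (Lam \<Theta> \<theta> \<epsilon> e) e n \<omega>"
  have ex: "\<exists>n\<ge>1. ?W n > ereal A"
    using te unfolding tau_e_def by (auto split: if_splits)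
  define m where "m = (LEAST n. n \<ge> 1 \<and> ?W n > ereal A)"
  have m: "m \<ge> 1 \<and> ?W m > ereal A" unfolding m_def by (rule LeastI_ex) (use ex in auto)
  have mn: "m \<le> n" using te ex unfolding tau_e_def m_def by auto
  from m have "ereal A < (SUP k\<in>{1..m}. SUP l\<in>Lam \<Theta> \<theta> \<epsilon> e. ereal (llr_sum e l k m \<omega>))"
    by (simp add: Wstat_def llr_sum_def)
  then obtain k l where "k \<in> {1..m}" "l \<in> Lam \<Theta> \<theta> \<epsilon> e" "A < llr_sum e l k m \<omega>"
    by (auto simp: less_SUP_iff)
  then show ?thesis using e mn by (intro bexI[of _ e] bexI[of _ l] bexI[of _ k] bexI[of _ m]) auto
qed

lemma tau_o_gt_imp_llr_sum_le:
  assumes e: "e \<in> {1..E}" and lam: "lam \<in> Lam \<Theta> \<theta> \<epsilon> e"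
    and gt: "enat n < tau_o p T N E \<theta> \<Theta> \<epsilon> A \<omega>" and k: "1 \<le> k" "k \<le> m" "m \<le> n"
  shows "llr_sum e lam k m \<omega> \<le> A"
proof (rule ccontr)
  let ?W = "\<lambda>n. Wstat p T N E \<theta> (Lam \<Theta> \<theta> \<epsilon> e) e n \<omega>"
  assume "\<not> llr_sum e lam k m \<omega> \<le> A"
  then have "ereal A < ereal (llr_sum e lam k m \<omega>)" by simp
  also have "ereal (llr_sum e lam k m \<omega>) \<le> ?W m"
    unfolding Wstat_def llr_sum_def using k lam by (intro SUP_upper2[of k] SUP_upper2[of lam]) auto
  finally have W: "ereal A < ?W m" .
  then have "(LEAST n. n \<ge> 1 \<and> ?W n > ereal A) \<le> m" using k by (intro Least_le) auto
  then have "tau_e p T N E \<theta> (Lam \<Theta> \<theta> \<epsilon> e) A e \<omega> \<le> enat m"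
    unfolding tau_e_def using W k by (auto intro!: exI[of _ m])
  moreover have "tau_o p T N E \<theta> \<Theta> \<epsilon> A \<omega> \<le> tau_e p T N E \<theta> (Lam \<Theta> \<theta> \<epsilon> e) A e \<omega>"
    unfolding tau_o_def using e by (intro Min_le) auto
  ultimately show False using gt k by (metis enat_ord_simps(1) leD order.trans)
qed

subsection \<open>False alarms\<close>

abbreviation Pinf :: "(nat \<Rightarrow> 'a) measure" where
  "Pinf \<equiv> P_inf M p T N E \<theta>"

lemma Pinf_eq: "Pinf = PiM UNIV (\<lambda>k. density M (p (\<theta> (b k))))"
  by (simp add: P_inf_def)

lemma nat_product_prob_space_Pinf: "nat_product_prob_space (\<lambda>k. density M (p (\<theta> (b k))))"
  by (rule nat_product_prob_space_density) (rule theta_batch_in)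

text \<open>The factor is written as \<open>exp (ln \<dots>)\<close> rather than as the likelihood ratio itself
  so that its products are exactly \<open>exp\<close> of the sums in \<open>Wstat\<close>, junk values of \<open>ln\<close>
  and of division by zero included.\<close>

definition lr_factor :: "nat \<Rightarrow> real \<Rightarrow> nat \<Rightarrow> nat \<Rightarrow> 'a \<Rightarrow> ennreal" where
  "lr_factor e l k i y = (if k \<le> i \<and> b i = e then ennreal (exp (ln (p l y / p (\<theta> e) y))) else 1)"

lemma prod_lr_factor: "(\<Prod>i<Suc m. lr_factor e l k i (\<omega> i)) = ennreal (exp (llr_sum e l k m \<omega>))"
proof -
  have "(\<Prod>i<Suc m. lr_factor e l k i (\<omega> i))
      = (\<Prod>i\<in>{i\<in>{..<Suc m}. k \<le> i \<and> b i = e}. ennreal (exp (ln (p l (\<omega> i) / p (\<theta> e) (\<omega> i)))))"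
    unfolding lr_factor_def by (subst prod.inter_filter) auto
  also have "{i\<in>{..<Suc m}. k \<le> i \<and> b i = e} = {i\<in>{k..m}. b i = e}" by auto
  finally show ?thesis
    by (simp add: prod_ennreal llr_sum_def exp_sum)
qed

lemma prob_llr_sum_crossing:
  assumes e: "e \<in> {1..E}" and l: "l \<in> Lam \<Theta> \<theta> \<epsilon> e"
  shows "measure Pinf {\<omega>\<in>space Pinf. \<exists>m\<in>{k..n}. A < llr_sum e l k m \<omega>} \<le> exp (- A)"
proof -
  interpret nat_product_prob_space "\<lambda>k. density M (p (\<theta> (b k)))"
    by (rule nat_product_prob_space_Pinf)
  have lT: "l \<in> \<Theta>" using l Lam_subset by auto
  have w: "lr_factor e l k i \<in> borel_measurable (density M (p (\<theta> (b i))))" for i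
    unfolding lr_factor_def using lT theta_in[OF e] by (auto simp: measurable_cong_sets[OF sets_density refl])
  have w1: "(\<integral>\<^sup>+y. lr_factor e l k i y \<partial>density M (p (\<theta> (b i)))) \<le> 1" for i
  proof (cases "k \<le> i \<and> b i = e")
    case True
    then show ?thesis
      unfolding lr_factor_def using nn_integral_likelihood_ratio_le_1[OF lT theta_in[OF e] Lam_neq[OF l]] by simp
  next
    case False
    then have "lr_factor e l k i = (\<lambda>_. 1)" unfolding lr_factor_def by auto
    then show ?thesis using M.emeasure_space_1[of i] by simp
  qed
  define V where "V = {\<omega>\<in>space Pinf. \<exists>m\<le>Suc n. ennreal (exp A) < (\<Prod>i<m. lr_factor e l k i (\<omega> i))}"
  note crossing = maximal_inequality_prod[OF w w1, where a = "ennreal (exp A)" and n = "Suc n"]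
  have V: "V \<in> sets Pinf" "ennreal (exp A) * emeasure Pinf V \<le> 1"
    using crossing unfolding V_def Pinf_eq by blast+
  have "{\<omega>\<in>space Pinf. \<exists>m\<in>{k..n}. A < llr_sum e l k m \<omega>} \<subseteq> V"
  proof safe
    fix \<omega> m assume \<omega>: "\<omega> \<in> space Pinf" and m: "m \<in> {k..n}" and A: "A < llr_sum e l k m \<omega>"
    have "ennreal (exp A) < (\<Prod>i<Suc m. lr_factor e l k i (\<omega> i))"
      unfolding prod_lr_factor using A by (intro ennreal_lessI) auto
    then show "\<omega> \<in> V" unfolding V_def using \<omega> m by (intro CollectI conjI exI[of _ "Suc m"]) auto
  qed
  then have "measure Pinf {\<omega>\<in>space Pinf. \<exists>m\<in>{k..n}. A < llr_sum e l k m \<omega>} \<le> measure Pinf V"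
    using V(1) unfolding Pinf_eq by (intro P.finite_measure_mono)
  also have "\<dots> \<le> exp (- A)"
  proof -
    have "exp A * measure Pinf V \<le> 1"
      using V(2) unfolding Pinf_eq by (simp add: P.emeasure_eq_measure ennreal_mult[symmetric])
    then show ?thesis by (simp add: exp_minus field_simps)
  qed
  finally show ?thesis .
qed

lemma early_alarm_event:
  defines "\<Lambda> \<equiv> (\<Union>e\<in>{1..E}. Lam \<Theta> \<theta> \<epsilon> e)"
  obtains Bad where "Bad \<in> sets Pinf" "measure Pinf Bad \<le> real n * real (E * card \<Lambda>) * exp (- A)"
    "\<And>\<omega>. \<omega> \<in> space Pinf - Bad \<Longrightarrow> enat n < tau_o p T N E \<theta> \<Theta> \<epsilon> A \<omega>"
proof -
  define I where "I = (SIGMA e:{1..E}. Lam \<Theta> \<theta> \<epsilon> e \<times> {1..n})"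
  define X where "X = (\<lambda>(e, l, k). {\<omega>\<in>space Pinf. \<exists>m\<in>{k..n}. A < llr_sum e l k m \<omega>})"
  have I_sub: "I \<subseteq> {1..E} \<times> \<Lambda> \<times> {1..n}" unfolding I_def \<Lambda>_def by auto
  have fin: "finite \<Lambda>" unfolding \<Lambda>_def using Lam_finite by auto
  then have "finite I" using I_sub by (meson finite_SigmaI finite_atLeastAtMost finite_subset)
  have X: "X t \<in> sets Pinf" "measure Pinf (X t) \<le> exp (- A)" if "t \<in> I" for t
  proof -
    obtain e l k where t: "t = (e, l, k)" and e: "e \<in> {1..E}" and l: "l \<in> Lam \<Theta> \<theta> \<epsilon> e"
      using \<open>t \<in> I\<close> unfolding I_def by auto
    have [measurable]: "llr_sum e l k m \<in> borel_measurable Pinf" for m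
      unfolding Pinf_eq using e l Lam_subset theta_batch_in by (intro llr_sum_measurable) auto
    show "X t \<in> sets Pinf" unfolding X_def t prod.case by measurable
    show "measure Pinf (X t) \<le> exp (- A)" unfolding X_def t using prob_llr_sum_crossing[OF e l] by simp
  qed
  show thesis
  proof (rule that[of "\<Union>t\<in>I. X t"])
    show "(\<Union>t\<in>I. X t) \<in> sets Pinf" using X \<open>finite I\<close> by auto
    have "measure Pinf (\<Union>t\<in>I. X t) \<le> (\<Sum>t\<in>I. measure Pinf (X t))"
      using \<open>finite I\<close> X by (intro measure_UNION_le) auto
    also have "\<dots> \<le> (\<Sum>t\<in>I. exp (- A))"
      using X by (intro sum_mono) auto
    also have "\<dots> \<le> real n * real (E * card \<Lambda>) * exp (- A)"
      using card_mono[OF _ I_sub] fin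
      by (auto simp: card_cartesian_product mult.commute mult.left_commute simp flip: of_nat_mult)
    finally show "measure Pinf (\<Union>t\<in>I. X t) \<le> real n * real (E * card \<Lambda>) * exp (- A)" .
  next
    fix \<omega> assume \<omega>: "\<omega> \<in> space Pinf - (\<Union>t\<in>I. X t)"
    show "enat n < tau_o p T N E \<theta> \<Theta> \<epsilon> A \<omega>"
    proof (rule ccontr)
      assume "\<not> enat n < tau_o p T N E \<theta> \<Theta> \<epsilon> A \<omega>"
      then have "\<omega> \<in> (\<Union>t\<in>I. X t)"
        using tau_o_le_imp_llr_sum_gt \<omega> unfolding I_def X_def by fastforce
      then show False using \<omega> by simp
    qed
  qed
qed

lemma nn_integral_tau_o_Pinf_ge:
  defines "\<Lambda> \<equiv> (\<Union>e\<in>{1..E}. Lam \<Theta> \<theta> \<epsilon> e)"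
  shows "ennreal (real n * (1 - real n * real (E * card \<Lambda>) * exp (- A)))
     \<le> (\<integral>\<^sup>+ \<omega>. ennreal_of_enat (tau_o p T N E \<theta> \<Theta> \<epsilon> A \<omega>) \<partial>Pinf)"
proof -
  interpret nat_product_prob_space "\<lambda>k. density M (p (\<theta> (b k)))"
    by (rule nat_product_prob_space_Pinf)
  obtain Bad where Bad: "Bad \<in> sets Pinf" "measure Pinf Bad \<le> real n * real (E * card \<Lambda>) * exp (- A)"
    and no_alarm: "\<And>\<omega>. \<omega> \<in> space Pinf - Bad \<Longrightarrow> enat n < tau_o p T N E \<theta> \<Theta> \<epsilon> A \<omega>"
    using early_alarm_event[where n = n and A = A] unfolding \<Lambda>_def by blast
  define G where "G = space Pinf - Bad"
  have G: "G \<in> sets Pinf" "measure Pinf G = 1 - measure Pinf Bad"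
    unfolding G_def using Bad P.prob_compl by (auto simp: Pinf_eq)
  have "of_nat n * indicator G \<omega> \<le> ennreal_of_enat (tau_o p T N E \<theta> \<Theta> \<epsilon> A \<omega>)" for \<omega>
  proof (cases "\<omega> \<in> G")
    case True
    then have "ennreal_of_enat (enat n) \<le> ennreal_of_enat (tau_o p T N E \<theta> \<Theta> \<epsilon> A \<omega>)"
      using no_alarm unfolding G_def by (simp only: ennreal_of_enat_le_iff less_imp_le)
    then show ?thesis using True by simp
  qed simp
  then have "(\<integral>\<^sup>+ \<omega>. of_nat n * indicator G \<omega> \<partial>Pinf)
      \<le> (\<integral>\<^sup>+ \<omega>. ennreal_of_enat (tau_o p T N E \<theta> \<Theta> \<epsilon> A \<omega>) \<partial>Pinf)"
    by (intro nn_integral_mono)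
  moreover have "ennreal (real n * (1 - real n * real (E * card \<Lambda>) * exp (- A)))
      \<le> ennreal (real n * measure Pinf G)"
    using Bad G(2) by (intro ennreal_leI mult_left_mono) auto
  moreover have "ennreal (real n * measure Pinf G) = (\<integral>\<^sup>+ \<omega>. of_nat n * indicator G \<omega> \<partial>Pinf)"
    using G unfolding Pinf_eq
    by (simp add: nn_integral_cmult_indicator P.emeasure_eq_measure ennreal_mult ennreal_of_nat_eq_real_of_nat)
  ultimately show ?thesis by order
qed

lemma nn_integral_tau_o_Pinf_log_threshold:
  obtains c where "0 < c"
    "\<And>\<beta>. 1 \<le> \<beta> \<Longrightarrow> ennreal \<beta> \<le> (\<integral>\<^sup>+ \<omega>. ennreal_of_enat (tau_o p T N E \<theta> \<Theta> \<epsilon> (ln \<beta> + c) \<omega>) \<partial>Pinf)"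
proof -
  define \<Lambda> where "\<Lambda> = (\<Union>e\<in>{1..E}. Lam \<Theta> \<theta> \<epsilon> e)"
  define S where "S = real (E * card \<Lambda>)"
  define c where "c = ln (6 * (S + 1))"
  have S: "0 \<le> S" unfolding S_def by simp
  show thesis
  proof (rule that)
    show "0 < c" unfolding c_def using S by simp
    fix \<beta> :: real assume \<beta>: "1 \<le> \<beta>"
    define n where "n = nat \<lceil>3 * \<beta>\<rceil>"
    have n: "3 * \<beta> \<le> real n" "real n \<le> 4 * \<beta>" unfolding n_def using \<beta> by linarith+
    have "exp (- (ln \<beta> + c)) = inverse (exp (ln \<beta>) * exp (ln (6 * (S + 1))))"
      unfolding c_def by (simp only: exp_minus exp_add)
    also have "\<dots> = 1 / (\<beta> * (6 * (S + 1)))"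
      using \<beta> S by (simp add: inverse_eq_divide)
    finally have "exp (- (ln \<beta> + c)) = 1 / (\<beta> * (6 * (S + 1)))" .
    then have "real n * S * exp (- (ln \<beta> + c)) = real n * S / (\<beta> * (6 * (S + 1)))" by simp
    also have "\<dots> \<le> 4 * \<beta> * S / (\<beta> * (6 * (S + 1)))"
      using n S \<beta> by (intro divide_right_mono mult_right_mono) auto
    also have "\<dots> = 2 / 3 * (S / (S + 1))"
    proof -
      have "\<beta> \<noteq> 0" "S + 1 \<noteq> 0" using \<beta> S by auto
      then show ?thesis by (simp add: divide_simps)
    qed
    also have "\<dots> \<le> 2 / 3 * 1" using S by (intro mult_left_mono) auto
    finally have "real n * S * exp (- (ln \<beta> + c)) \<le> 2 / 3" by simp
    then have "real n * (1 / 3) \<le> real n * (1 - real n * S * exp (- (ln \<beta> + c)))"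
      by (intro mult_left_mono) auto
    then have "\<beta> \<le> real n * (1 - real n * S * exp (- (ln \<beta> + c)))"
      using n by simp
    then have "ennreal \<beta> \<le> ennreal (real n * (1 - real n * real (E * card \<Lambda>) * exp (- (ln \<beta> + c))))"
      unfolding S_def by (rule ennreal_leI)
    also have "\<dots> \<le> (\<integral>\<^sup>+ \<omega>. ennreal_of_enat (tau_o p T N E \<theta> \<Theta> \<epsilon> (ln \<beta> + c) \<omega>) \<partial>Pinf)"
      unfolding \<Lambda>_def by (rule nn_integral_tau_o_Pinf_ge)
    finally show "ennreal \<beta> \<le> \<dots>" .
  qed
qed

subsection \<open>Detection delay\<close>

definition change_param :: "nat \<Rightarrow> real \<Rightarrow> nat \<Rightarrow> real" where
  "change_param e lam k = (if 1 \<le> k \<and> b k = e then lam else \<theta> (b k))"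

lemma P_change_eq: "P_change M p T N E \<theta> 1 e lam = PiM UNIV (\<lambda>k. density M (p (change_param e lam k)))"
  by (simp add: P_change_def change_param_def)

lemma change_param_in: "lam \<in> \<Theta> \<Longrightarrow> change_param e lam k \<in> \<Theta>"
  unfolding change_param_def using theta_batch_in by auto

lemma prob_window_llr_sum_le:
  assumes e: "e \<in> {1..E}" and lam: "lam \<in> Lam \<Theta> \<theta> \<epsilon> e"
    and K: "0 < K" and \<mu>: "0 < \<mu>" "\<mu> \<le> K"
    and int: "integrable (density M (p lam)) (\<lambda>y. min (ln (p lam y / p (\<theta> e) y)) K)"
    and mean: "(\<integral>y. min (ln (p lam y / p (\<theta> e) y)) K \<partial>density M (p lam)) = \<mu>"
    and m: "1 \<le> m" "2 * A / \<mu> \<le> real m"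
  shows "measure (P_change M p T N E \<theta> 1 e lam) {\<omega>\<in>space (P_change M p T N E \<theta> 1 e lam).
      (\<Sum>t\<in>{t \<in> {i * (m * T) <.. (i + 1) * (m * T)}. b t = e}. ln (p lam (\<omega> t) / p (\<theta> e) (\<omega> t))) \<le> A}
    \<le> 1 - \<mu> / (2 * K)" (is "measure _ {\<omega>\<in>_. (\<Sum>t\<in>?S. _) \<le> A} \<le> _")
proof -
  have lT: "lam \<in> \<Theta>" using lam Lam_subset by auto
  interpret nat_product_prob_space "\<lambda>k. density M (p (change_param e lam k))"
    by (rule nat_product_prob_space_density) (rule change_param_in[OF lT])
  have card: "m \<le> card ?S"
    using card_batch_window[OF e, of m "i * m"] by (simp add: algebra_simps)
  have "?S \<noteq> {}"
  proof
    assume "?S = {}"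
    with card have "m \<le> 0" by (simp only: card.empty)
    with m show False by simp
  qed
  have "A \<le> real m * \<mu> / 2" using m \<mu> by (simp add: field_simps)
  also have "\<dots> \<le> real (card ?S) * \<mu> / 2" using card \<mu> by simp
  finally have "A \<le> real (card ?S) * \<mu> / 2" .
  moreover have "change_param e lam t = lam" if "t \<in> ?S" for t
    using that unfolding change_param_def by auto
  moreover have "(\<lambda>y. ln (p lam y / p (\<theta> e) y)) \<in> borel_measurable M"
    using lT theta_in[OF e] by measurable
  ultimately show ?thesis
    unfolding P_change_eq using \<open>?S \<noteq> {}\<close> K \<mu> int mean
    by (intro prob_sum_coordinates_le) auto
qed

lemma nn_integral_tau_o_Pchange_le:
  assumes e: "e \<in> {1..E}" and lam: "lam \<in> Lam \<Theta> \<theta> \<epsilon> e"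
    and K: "0 < K" and \<mu>: "0 < \<mu>" "\<mu> \<le> K"
    and int: "integrable (density M (p lam)) (\<lambda>y. min (ln (p lam y / p (\<theta> e) y)) K)"
    and mean: "(\<integral>y. min (ln (p lam y / p (\<theta> e) y)) K \<partial>density M (p lam)) = \<mu>"
    and m: "1 \<le> m" "2 * A / \<mu> \<le> real m"
  shows "(\<integral>\<^sup>+\<omega>. ennreal_of_enat (tau_o p T N E \<theta> \<Theta> \<epsilon> A \<omega>) \<partial>P_change M p T N E \<theta> 1 e lam)
    \<le> ennreal (real (m * T) * (2 * K / \<mu>))"
proof -
  have lT: "lam \<in> \<Theta>" using lam Lam_subset by auto
  interpret nat_product_prob_space "\<lambda>k. density M (p (change_param e lam k))"
    by (rule nat_product_prob_space_density) (rule change_param_in[OF lT])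
  let ?Q = "P_change M p T N E \<theta> 1 e lam"
  define L where "L = m * T"
  have L: "1 \<le> L" unfolding L_def using m T_pos by simp
  define S where "S i = {t \<in> {i * L <.. (i + 1) * L}. b t = e}" for i
  define X where "X y = ln (p lam y / p (\<theta> e) y)" for y
  define r where "r = 1 - \<mu> / (2 * K)"
  have XM: "(\<lambda>y. ln (p lam y / p (\<theta> e) y)) \<in> borel_measurable M"
    using lT theta_in[OF e] by measurable
  then have [measurable]: "X \<in> borel_measurable (density M (p (change_param e lam t)))" for t
    unfolding X_def[abs_def] by (simp add: measurable_cong_sets[OF sets_density refl])
  define F where "F j = {\<omega>\<in>space ?Q. \<forall>i<j. (\<Sum>t\<in>S i. X (\<omega> t)) \<le> A}" for j
  have F_le: "measure ?Q (F j) \<le> r ^ j" for j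
    using disjoint_family_blocks prob_window_llr_sum_le[OF e lam K \<mu> int mean m] XM
    unfolding F_def P_change_eq
    by (intro prob_all_block_sums_le[where K = "\<lambda>i. {i * L <.. (i + 1) * L}"])
      (auto simp: S_def X_def L_def r_def)
  have F_sets: "F j \<in> sets ?Q" for j unfolding F_def P_change_eq by measurable
  have survive: "\<omega> \<in> F j" if "\<omega> \<in> space ?Q" "enat (j * L) < tau_o p T N E \<theta> \<Theta> \<epsilon> A \<omega>" for \<omega> j
  proof -
    have "llr_sum e lam (i * L + 1) ((i + 1) * L) \<omega> \<le> A" if "i < j" for i
    proof -
      have "(i + 1) * L \<le> j * L" using that by (intro mult_le_mono1) simp
      then show ?thesis using L \<open>enat (j * L) < _\<close>
        by (intro tau_o_gt_imp_llr_sum_le[OF e lam, where n = "j * L"]) auto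
    qed
    moreover have "llr_sum e lam (i * L + 1) ((i + 1) * L) \<omega> = (\<Sum>t\<in>S i. X (\<omega> t))" for i
      unfolding llr_sum_def S_def X_def by (intro sum.cong) auto
    ultimately show ?thesis unfolding F_def using \<open>\<omega> \<in> space ?Q\<close> by auto
  qed
  have "0 \<le> r" "r < 1" unfolding r_def using K \<mu> by (auto simp: field_simps)
  then have "(\<integral>\<^sup>+\<omega>. ennreal_of_enat (tau_o p T N E \<theta> \<Theta> \<epsilon> A \<omega>) \<partial>?Q) \<le> ennreal (real L / (1 - r))"
    using F_sets F_le L survive unfolding P_change_eq by (intro P.nn_integral_le_geometric_blocks)
  also have "real L / (1 - r) = real (m * T) * (2 * K / \<mu>)"
    unfolding r_def L_def using K \<mu> by (simp add: field_simps)
  finally show ?thesis .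
qed

lemma nn_integral_tau_o_Pchange_affine:
  assumes e: "e \<in> {1..E}" and lam: "lam \<in> Lam \<Theta> \<theta> \<epsilon> e"
  obtains C1 C2 where "0 \<le> C1"
    "\<And>A. 0 < A \<Longrightarrow> (\<integral>\<^sup>+ \<omega>. ennreal_of_enat (tau_o p T N E \<theta> \<Theta> \<epsilon> A \<omega>) \<partial>P_change M p T N E \<theta> 1 e lam)
       \<le> ennreal (C1 * A + C2)"
proof -
  have lT: "lam \<in> \<Theta>" using lam Lam_subset by auto
  obtain K \<mu> where K: "0 < K" and \<mu>: "0 < \<mu>" "\<mu> \<le> K"
    and int: "integrable (density M (p lam)) (\<lambda>y. min (ln (p lam y / p (\<theta> e) y)) K)"
    and mean: "(\<integral>y. min (ln (p lam y / p (\<theta> e) y)) K \<partial>density M (p lam)) = \<mu>"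
    using truncated_llr_mean_pos[OF lT theta_in[OF e] Lam_neq[OF lam]] by blast
  show thesis
  proof (rule that)
    show "0 \<le> 4 * real T * K / \<mu>\<^sup>2" using K by simp
    fix A :: real assume A: "0 < A"
    define m where "m = nat \<lceil>2 * A / \<mu>\<rceil> + 1"
    have "0 \<le> 2 * A / \<mu>" using A \<mu> by simp
    then have m: "1 \<le> m" "2 * A / \<mu> \<le> real m" "real m \<le> 2 * A / \<mu> + 2"
      unfolding m_def by linarith+
    have "(\<integral>\<^sup>+ \<omega>. ennreal_of_enat (tau_o p T N E \<theta> \<Theta> \<epsilon> A \<omega>) \<partial>P_change M p T N E \<theta> 1 e lam)
        \<le> ennreal (real (m * T) * (2 * K / \<mu>))"
      using m by (intro nn_integral_tau_o_Pchange_le[OF e lam K \<mu> int mean])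
    also have "\<dots> \<le> ennreal ((2 * A / \<mu> + 2) * (real T * (2 * K / \<mu>)))"
    proof (rule ennreal_leI)
      have "0 \<le> real T * (2 * K / \<mu>)" using K \<mu> by simp
      from mult_right_mono[OF m(3) this]
      show "real (m * T) * (2 * K / \<mu>) \<le> (2 * A / \<mu> + 2) * (real T * (2 * K / \<mu>))"
        by (simp add: mult.assoc)
    qed
    also have "(2 * A / \<mu> + 2) * (real T * (2 * K / \<mu>)) = 4 * real T * K / \<mu>\<^sup>2 * A + 4 * real T * K / \<mu>"
      using \<mu> by (simp add: field_simps power2_eq_square)
    finally show "(\<integral>\<^sup>+ \<omega>. ennreal_of_enat (tau_o p T N E \<theta> \<Theta> \<epsilon> A \<omega>) \<partial>P_change M p T N E \<theta> 1 e lam)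
       \<le> ennreal (4 * real T * K / \<mu>\<^sup>2 * A + 4 * real T * K / \<mu>)" .
  qed
qed

text \<open>This is where finiteness of the sets \<open>Lam\<close> enters the delay bound.\<close>

lemma nn_integral_tau_o_Pchange_uniform_slope:
  obtains C1 where "0 \<le> C1" "\<And>e lam. e \<in> {1..E} \<Longrightarrow> lam \<in> Lam \<Theta> \<theta> \<epsilon> e \<Longrightarrow>
    \<exists>C2. \<forall>A>0. (\<integral>\<^sup>+ \<omega>. ennreal_of_enat (tau_o p T N E \<theta> \<Theta> \<epsilon> A \<omega>) \<partial>P_change M p T N E \<theta> 1 e lam)
       \<le> ennreal (C1 * A + C2)"
proof -
  define P where "P = (SIGMA e:{1..E}. Lam \<Theta> \<theta> \<epsilon> e)"
  have "finite P" unfolding P_def using Lam_finite by auto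
  have "\<forall>x\<in>P. \<exists>c. 0 \<le> c \<and> (\<exists>C2. \<forall>A>0.
      (\<integral>\<^sup>+ \<omega>. ennreal_of_enat (tau_o p T N E \<theta> \<Theta> \<epsilon> A \<omega>) \<partial>P_change M p T N E \<theta> 1 (fst x) (snd x))
        \<le> ennreal (c * A + C2))"
    unfolding P_def by (metis SigmaE fst_conv snd_conv nn_integral_tau_o_Pchange_affine)
  then obtain c where c: "\<And>x. x \<in> P \<Longrightarrow> 0 \<le> c x \<and> (\<exists>C2. \<forall>A>0.
      (\<integral>\<^sup>+ \<omega>. ennreal_of_enat (tau_o p T N E \<theta> \<Theta> \<epsilon> A \<omega>) \<partial>P_change M p T N E \<theta> 1 (fst x) (snd x))
        \<le> ennreal (c x * A + C2))"
    by metis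
  show thesis
  proof (rule that[of "\<Sum>x\<in>P. c x"])
    show "0 \<le> (\<Sum>x\<in>P. c x)" using c by (intro sum_nonneg) auto
    fix e lam assume "e \<in> {1..E}" "lam \<in> Lam \<Theta> \<theta> \<epsilon> e"
    then have x: "(e, lam) \<in> P" unfolding P_def by auto
    then obtain C2 where C2: "\<And>A. 0 < A \<Longrightarrow>
        (\<integral>\<^sup>+ \<omega>. ennreal_of_enat (tau_o p T N E \<theta> \<Theta> \<epsilon> A \<omega>) \<partial>P_change M p T N E \<theta> 1 e lam)
          \<le> ennreal (c (e, lam) * A + C2)"
      using c[OF x] by auto
    have "c (e, lam) \<le> (\<Sum>x\<in>P. c x)" using x c \<open>finite P\<close> by (intro member_le_sum) auto
    then have "ennreal (c (e, lam) * A + C2) \<le> ennreal ((\<Sum>x\<in>P. c x) * A + C2)" if "0 < A" for A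
      using that by (intro ennreal_leI) (simp add: mult_right_mono)
    then show "\<exists>C2. \<forall>A>0. (\<integral>\<^sup>+ \<omega>. ennreal_of_enat (tau_o p T N E \<theta> \<Theta> \<epsilon> A \<omega>) \<partial>P_change M p T N E \<theta> 1 e lam)
       \<le> ennreal ((\<Sum>x\<in>P. c x) * A + C2)"
      using C2 by (meson order.trans)
  qed
qed

lemma nn_integral_tau_o_Pchange_log_threshold:
  assumes "0 < c"
  obtains C where "0 < C" "\<And>e lam. e \<in> {1..E} \<Longrightarrow> lam \<in> Lam \<Theta> \<theta> \<epsilon> e \<Longrightarrow>
    \<exists>g. (g \<longlongrightarrow> 0) at_top \<and> (\<forall>\<^sub>F \<beta> in at_top.
      (\<integral>\<^sup>+ \<omega>. ennreal_of_enat (tau_o p T N E \<theta> \<Theta> \<epsilon> (ln \<beta> + c) \<omega>) \<partial>P_change M p T N E \<theta> 1 e lam)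
        \<le> ennreal (C * ln \<beta> * (1 + g \<beta>)))"
proof -
  obtain C1 where "0 \<le> C1" and delay: "\<And>e lam. e \<in> {1..E} \<Longrightarrow> lam \<in> Lam \<Theta> \<theta> \<epsilon> e \<Longrightarrow>
      \<exists>C2. \<forall>A>0. (\<integral>\<^sup>+ \<omega>. ennreal_of_enat (tau_o p T N E \<theta> \<Theta> \<epsilon> A \<omega>) \<partial>P_change M p T N E \<theta> 1 e lam)
        \<le> ennreal (C1 * A + C2)"
    using nn_integral_tau_o_Pchange_uniform_slope by blast
  show thesis
  proof (rule that[of "C1 + 1"])
    show "0 < C1 + 1" using \<open>0 \<le> C1\<close> by simp
    fix e lam assume el: "e \<in> {1..E}" "lam \<in> Lam \<Theta> \<theta> \<epsilon> e"
    obtain C2 where C2: "\<And>A. 0 < A \<Longrightarrow> (\<integral>\<^sup>+ \<omega>. ennreal_of_enat (tau_o p T N E \<theta> \<Theta> \<epsilon> A \<omega>)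
        \<partial>P_change M p T N E \<theta> 1 e lam) \<le> ennreal (C1 * A + C2)"
      using delay[OF el] by blast
    obtain g where "(g \<longlongrightarrow> 0) at_top"
      and g: "\<And>\<beta>. 1 < \<beta> \<Longrightarrow> C1 * ln \<beta> + (C1 * c + C2) \<le> (C1 + 1) * ln \<beta> * (1 + g \<beta>)"
      using affine_ln_le_mult_ln[of "C1 + 1" C1 "C1 * c + C2"] \<open>0 \<le> C1\<close> by auto
    moreover have "\<forall>\<^sub>F \<beta> in at_top.
        (\<integral>\<^sup>+ \<omega>. ennreal_of_enat (tau_o p T N E \<theta> \<Theta> \<epsilon> (ln \<beta> + c) \<omega>) \<partial>P_change M p T N E \<theta> 1 e lam)
          \<le> ennreal ((C1 + 1) * ln \<beta> * (1 + g \<beta>))"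
      using eventually_gt_at_top[of 1]
    proof eventually_elim
      case (elim \<beta>)
      have "C1 * (ln \<beta> + c) + C2 \<le> (C1 + 1) * ln \<beta> * (1 + g \<beta>)"
        using g[OF elim] by (simp add: algebra_simps)
      then show ?case
        using C2[of "ln \<beta> + c"] elim \<open>0 < c\<close> by (meson ennreal_leI ln_gt_zero add_pos_pos order.trans)
    qed
    ultimately show "\<exists>g. (g \<longlongrightarrow> 0) at_top \<and> (\<forall>\<^sub>F \<beta> in at_top.
        (\<integral>\<^sup>+ \<omega>. ennreal_of_enat (tau_o p T N E \<theta> \<Theta> \<epsilon> (ln \<beta> + c) \<omega>) \<partial>P_change M p T N E \<theta> 1 e lam)
          \<le> ennreal ((C1 + 1) * ln \<beta> * (1 + g \<beta>)))" by blast
  qed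
qed

end

theorem theorem1:
  fixes M :: "'a measure" and p :: "real \<Rightarrow> 'a \<Rightarrow> real" and \<Theta> :: "real set"
    and T E :: nat and N :: "nat \<Rightarrow> nat" and \<theta> :: "nat \<Rightarrow> real" and \<epsilon> :: real
  assumes dens: "is_density_family M p \<Theta>"
    and KL_fin: "\<And>a b. a \<in> \<Theta> \<Longrightarrow> b \<in> \<Theta> \<Longrightarrow> a \<noteq> b \<Longrightarrow> KL_finite M p a b \<and> KL M p a b > 0"
    and T_pos: "T \<ge> 1"
    and N0: "N 0 = 0" and NE: "N E = T"
    and N_mono: "\<And>j. j < E \<Longrightarrow> N j < N (Suc j)"
    and theta_in: "\<And>e. e \<in> {1..E} \<Longrightarrow> \<theta> e \<in> \<Theta>"
    and eps_pos: "\<epsilon> > 0"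
    and Lam_finite: "\<And>e. e \<in> {1..E} \<Longrightarrow> finite (Lam \<Theta> \<theta> \<epsilon> e)"
  shows "\<exists>A :: real \<Rightarrow> real.
           ((\<lambda>\<beta>. A \<beta> / ln \<beta>) \<longlongrightarrow> 1) at_top \<and> (\<forall>\<^sub>F \<beta> in at_top. A \<beta> > 0) \<and>
           (\<exists>h :: real \<Rightarrow> real. (h \<longlongrightarrow> 0) at_top \<and>
              (\<forall>\<^sub>F \<beta> in at_top.
                 (\<integral>\<^sup>+ \<omega>. ennreal_of_enat (tau_o p T N E \<theta> \<Theta> \<epsilon> (A \<beta>) \<omega>) \<partial>(P_inf M p T N E \<theta>))
                   \<ge> ennreal (\<beta> * (1 + h \<beta>)))) \<and>
           (\<exists>C > 0. \<forall>e \<in> {1..E}. \<forall>lam \<in> Lam \<Theta> \<theta> \<epsilon> e.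
              \<exists>g :: real \<Rightarrow> real. (g \<longlongrightarrow> 0) at_top \<and>
                (\<forall>\<^sub>F \<beta> in at_top.
                   (\<integral>\<^sup>+ \<omega>. ennreal_of_enat (tau_o p T N E \<theta> \<Theta> \<epsilon> (A \<beta>) \<omega>) \<partial>(P_change M p T N E \<theta> 1 e lam))
                     \<le> ennreal (C * ln \<beta> * (1 + g \<beta>))))"
proof -
  interpret change_point_model T E N M p \<Theta> \<theta> \<epsilon>
    by unfold_locales (use assms in auto)
  obtain c where "0 < c" and false_alarm: "\<And>\<beta>. 1 \<le> \<beta> \<Longrightarrow>
      ennreal \<beta> \<le> (\<integral>\<^sup>+ \<omega>. ennreal_of_enat (tau_o p T N E \<theta> \<Theta> \<epsilon> (ln \<beta> + c) \<omega>) \<partial>Pinf)"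
    using nn_integral_tau_o_Pinf_log_threshold by blast
  obtain C where "0 < C" and delay: "\<And>e lam. e \<in> {1..E} \<Longrightarrow> lam \<in> Lam \<Theta> \<theta> \<epsilon> e \<Longrightarrow>
      \<exists>g. (g \<longlongrightarrow> 0) at_top \<and> (\<forall>\<^sub>F \<beta> in at_top.
        (\<integral>\<^sup>+ \<omega>. ennreal_of_enat (tau_o p T N E \<theta> \<Theta> \<epsilon> (ln \<beta> + c) \<omega>) \<partial>P_change M p T N E \<theta> 1 e lam)
          \<le> ennreal (C * ln \<beta> * (1 + g \<beta>)))"
    using nn_integral_tau_o_Pchange_log_threshold[OF \<open>0 < c\<close>] by blast
  show ?thesis
  proof (rule exI[of _ "\<lambda>\<beta>. ln \<beta> + c"], intro conjI)
    show "((\<lambda>\<beta>. (ln \<beta> + c) / ln \<beta>) \<longlongrightarrow> 1) at_top" by (rule tendsto_ln_add_const_div_ln)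
    show "\<forall>\<^sub>F \<beta> in at_top. 0 < ln \<beta> + c"
      using eventually_ge_at_top[of 1] by eventually_elim (use \<open>0 < c\<close> in \<open>auto intro: add_nonneg_pos\<close>)
    show "\<exists>h. (h \<longlongrightarrow> 0) at_top \<and> (\<forall>\<^sub>F \<beta> in at_top. ennreal (\<beta> * (1 + h \<beta>))
        \<le> (\<integral>\<^sup>+ \<omega>. ennreal_of_enat (tau_o p T N E \<theta> \<Theta> \<epsilon> (ln \<beta> + c) \<omega>) \<partial>P_inf M p T N E \<theta>))"
      using eventually_mono[OF eventually_ge_at_top[of 1] false_alarm] by (intro exI[of _ "\<lambda>_. 0"]) auto
    show "\<exists>C>0. \<forall>e\<in>{1..E}. \<forall>lam\<in>Lam \<Theta> \<theta> \<epsilon> e. \<exists>g. (g \<longlongrightarrow> 0) at_top \<and> (\<forall>\<^sub>F \<beta> in at_top.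
        (\<integral>\<^sup>+ \<omega>. ennreal_of_enat (tau_o p T N E \<theta> \<Theta> \<epsilon> (ln \<beta> + c) \<omega>) \<partial>P_change M p T N E \<theta> 1 e lam)
          \<le> ennreal (C * ln \<beta> * (1 + g \<beta>)))"
      using delay \<open>0 < C\<close> by blast
  qed
qed

end
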